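(* Assume (H1)–(H5) and $\mathbb A_n=\mathbb T_n$. Then $\lim_{n\to\infty}\mathbb E[R_0(n)^2]=0$.
   Context: Let $d\ge1$, $S=\mathbb R^d$ with Borel $\sigma$-field. Binary tree: $\mathbb G_0=\mathbb T_0=\{\emptyset\}$, $\mathbb G_k=\{0,1\}^k$ (so $|\mathbb G_k|=2^k$), $\mathbb T_k=\bigcup_{r\le k}\mathbb G_r$, $\mathbb T=\bigcup_{r\ge0}\mathbb G_r$; $ij$ is the concatenation of words $i,j$ and $iA=\{ij:j\in A\}$. Given a probability kernel $\mathcal P$ from $S$ to $S^2$, for $g:S^3\to\mathbb R$ set $\mathcal Pg(y)=\int g(y,y_0,y_1)\mathcal P(y,dy_0,dy_1)$ and for $h:S^2\to\mathbb R$ set $\mathcal Ph(y)=\int h(y_0,y_1)\mathcal P(y,dy_0,dy_1)$. A bifurcating Markov chain (BMC) with initial law $\nu$ and kernel $\mathcal P$ is a process $X=(X_i)_{i\in\mathbb T}$ with values in $S$ such that $X_\emptyset\sim\nu$ and for all $k\ge0$ and bounded measurable $g_i:S^3\to\mathbb R$, $\mathbb E[\prod_{i\in\mathbb G_k}g_i(X_i,X_{i0},X_{i1})\mid\sigma(X_j;j\in\mathbb T_k)]=\prod_{i\in\mathbb G_k}\mathcal Pg_i(X_i)$. Let $P_0(y,A)=\mathcal P(y,A\times S)$, $P_1(y,A)=\mathcal P(y,S\times A)$, $\mathcal Q=\frac12(P_0+P_1)$, $\mathcal Q^n$ its $n$-th iterate, $\langle\lambda,f\rangle=\int f\,d\lambda$.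 For finite $A\subset\mathbb T$ and $f:S^3\to\mathbb R$, $M_A(f)=\sum_{u\in A}f(X_u,X_{u0},X_{u1})$. $X$ is a BMC with kernel $\mathcal P$ and initial law $\nu$ satisfying: (H1) There is a set $F$ of real measurable functions on $S$ which is a vector space containing the constants, with $f^2\in F$ for $f\in F$, $F\subset L^1(\nu)$, and for $f_0,f_1\in F$, $f_0\otimes f_1$ is $\mathcal P(y,\cdot)$-integrable for every $y$ and $\mathcal P(f_0\otimes f_1)\in F$. (H2) There is a probability measure $\mu$ on $S$ with $F\subset L^1(\mu)$ such that for every $f\in F$, $\mathcal Q^nf\to\langle\mu,f\rangle$ pointwise and there is $g\in F$ with $|\mathcal Q^nf|\le g$ for all $n$; moreover there exist $V\in F$ with $V\ge1$, $\alpha\in(0,1)$ and $M<\infty$ such that $|\mathcal Q^nf-\langle\mu,f\rangle|\le M\alpha^nV$ for all $n\in\mathbb N$ and all measurable $f$ with $|f|\le V$. (H3) $\mathcal P(y,dy_0,dy_1)$ has a Lebesgue density $\mathcal P(y,y_0,y_1)$; then $\mathcal Q$ has density $\mathcal Q(y,z)=\frac12\int(\mathcal P(y,z,w)+\mathcal P(y,w,z))dw$, $\mu$ has a Lebesgue density denoted $\mu(\cdot)$, and $\mu^{\triangle}(y,y_0,y_1)=\mu(y)\mathcal P(y,y_0,y_1)$. (H4) $C_0=\sup_{y,y_0,y_1\in S}(\mu(y)+\mathcal Q(y,y_0)+\mathcal P(y,y_0,y_1))<\infty$. (H5) $h_n=2^{-n\gamma}$ for some $\gamma\in(0,1/(3d))$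 with $2\alpha^2<2^{3d\gamma}$; $K_0:\mathbb R^d\to\mathbb R$ is bounded, integrable (hence square integrable) with $\int K_0=1$. Let $K=K_0\otimes K_0\otimes K_0$ on $\mathbb R^{3d}$. Fix $(x,x_0,x_1)\in S^3$ with $\mu(x)>0$. Define $f_n(y,y_0,y_1)=h_n^{-3d/2}K(h_n^{-1}(x-y),h_n^{-1}(x_0-y_0),h_n^{-1}(x_1-y_1))$ and $\tilde f_n=f_n-\langle\mu,\mathcal Pf_n\rangle$. Let $(p_n)$ be a non-decreasing sequence of positive integers with $p_n<n$, $p_n/n\to1$, and $n-p_n-\lambda\log n\to+\infty$ for every $\lambda>0$; write $p=p_n$. Define $R_0(n)=|\mathbb G_n|^{-1/2}\sum_{k=0}^{n-p-1}M_{\mathbb G_k}(\tilde f_n)$. *)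

theory Defs
  imports "HOL-Probability.Probability"
begin

text \<open>Binary tree: vertices are words over {0,1}, encoded as bool lists
  (False = 0, True = 1); the word i0 is i @ [False], the word i1 is i @ [True].\<close>

definition Gen :: "nat \<Rightarrow> bool list set" where
  "Gen k = {u. length u = k}"

definition Tree :: "nat \<Rightarrow> bool list set" where
  "Tree k = {u. length u \<le> k}"

definition Pop3 :: "('a \<Rightarrow> ('a \<times> 'a) measure) \<Rightarrow> ('a \<times> 'a \<times> 'a \<Rightarrow> real) \<Rightarrow> 'a \<Rightarrow> real" where
  "Pop3 P g y = (\<integral>z. g (y, fst z, snd z) \<partial>(P y))"

definition Pop2 :: "('a \<Rightarrow> ('a \<times> 'a) measure) \<Rightarrow> ('a \<times> 'a \<Rightarrow> real) \<Rightarrow> 'a \<Rightarrow> real" where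
  "Pop2 P h y = (\<integral>z. h z \<partial>(P y))"

definition Qop :: "('a \<Rightarrow> ('a \<times> 'a) measure) \<Rightarrow> ('a \<Rightarrow> real) \<Rightarrow> 'a \<Rightarrow> real" where
  "Qop P f y = ((\<integral>z. f (fst z) \<partial>(P y)) + (\<integral>z. f (snd z) \<partial>(P y))) / 2"

definition gen_sigma :: "'w measure \<Rightarrow> ('i \<Rightarrow> 'w \<Rightarrow> 'a::topological_space) \<Rightarrow> 'i set \<Rightarrow> 'w measure" where
  "gen_sigma M X I = sigma (space M) {X i -` A \<inter> space M | i A. i \<in> I \<and> A \<in> sets borel}"

definition MA :: "bool list set \<Rightarrow> (bool list \<Rightarrow> 'w \<Rightarrow> 'a) \<Rightarrow> ('a \<times> 'a \<times> 'a \<Rightarrow> real) \<Rightarrow> 'w \<Rightarrow> real" where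
  "MA A X f \<omega> = (\<Sum>u\<in>A. f (X u \<omega>, X (u @ [False]) \<omega>, X (u @ [True]) \<omega>))"

definition BMC :: "'w measure \<Rightarrow> (bool list \<Rightarrow> 'w \<Rightarrow> 'a::euclidean_space) \<Rightarrow> 'a measure
                   \<Rightarrow> ('a \<Rightarrow> ('a \<times> 'a) measure) \<Rightarrow> bool" where
  "BMC M X \<nu> P \<longleftrightarrow>
     prob_space M \<and>
     (\<forall>u. X u \<in> borel_measurable M) \<and>
     distr M borel (X []) = \<nu> \<and>
     (\<forall>k (g :: bool list \<Rightarrow> 'a \<times> 'a \<times> 'a \<Rightarrow> real).
        (\<forall>i\<in>Gen k. g i \<in> borel_measurable borel \<and> bounded (range (g i))) \<longrightarrow>
        (AE \<omega> in M.
           real_cond_exp M (gen_sigma M X (Tree k))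
             (\<lambda>\<omega>. \<Prod>i\<in>Gen k. g i (X i \<omega>, X (i @ [False]) \<omega>, X (i @ [True]) \<omega>)) \<omega>
           = (\<Prod>i\<in>Gen k. Pop3 P (g i) (X i \<omega>))))"

definition H1 :: "('a::euclidean_space \<Rightarrow> real) set \<Rightarrow> 'a measure \<Rightarrow> ('a \<Rightarrow> ('a \<times> 'a) measure) \<Rightarrow> bool" where
  "H1 F \<nu> P \<longleftrightarrow>
     (\<forall>f\<in>F. f \<in> borel_measurable borel) \<and>
     (\<forall>f\<in>F. \<forall>g\<in>F. (\<lambda>y. f y + g y) \<in> F) \<and>
     (\<forall>c. \<forall>f\<in>F. (\<lambda>y. c * f y) \<in> F) \<and>
     (\<forall>c. (\<lambda>_. c) \<in> F) \<and>
     (\<forall>f\<in>F. (\<lambda>y. (f y)\<^sup>2) \<in> F) \<and>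
     (\<forall>f\<in>F. integrable \<nu> f) \<and>
     (\<forall>f0\<in>F. \<forall>f1\<in>F.
        (\<forall>y. integrable (P y) (\<lambda>z. f0 (fst z) * f1 (snd z))) \<and>
        Pop2 P (\<lambda>z. f0 (fst z) * f1 (snd z)) \<in> F)"

definition H2 :: "('a::euclidean_space \<Rightarrow> real) set \<Rightarrow> ('a \<Rightarrow> ('a \<times> 'a) measure) \<Rightarrow> 'a measure \<Rightarrow> real \<Rightarrow> bool" where
  "H2 F P \<mu> \<alpha> \<longleftrightarrow>
     prob_space \<mu> \<and> sets \<mu> = sets borel \<and>
     (\<forall>f\<in>F. integrable \<mu> f) \<and>
     (\<forall>f\<in>F. (\<forall>y. (\<lambda>n. (Qop P ^^ n) f y) \<longlonglongrightarrow> (\<integral>z. f z \<partial>\<mu>)) \<and>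
             (\<exists>g\<in>F. \<forall>n y. \<bar>(Qop P ^^ n) f y\<bar> \<le> g y)) \<and>
     0 < \<alpha> \<and> \<alpha> < 1 \<and>
     (\<exists>V\<in>F. (\<forall>y. 1 \<le> V y) \<and>
        (\<exists>Mc::real. \<forall>f n y. f \<in> borel_measurable borel \<longrightarrow> (\<forall>z. \<bar>f z\<bar> \<le> V z) \<longrightarrow>
             \<bar>(Qop P ^^ n) f y - (\<integral>z. f z \<partial>\<mu>)\<bar> \<le> Mc * \<alpha> ^ n * V y))"

definition Qd :: "('a::euclidean_space \<Rightarrow> 'a \<Rightarrow> 'a \<Rightarrow> real) \<Rightarrow> 'a \<Rightarrow> 'a \<Rightarrow> ennreal" where
  "Qd pd y z = (\<integral>\<^sup>+ w. (ennreal (pd y z w) + ennreal (pd y w z)) \<partial>lborel) / 2"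

definition fn :: "('a::euclidean_space \<Rightarrow> real) \<Rightarrow> real \<Rightarrow> 'a \<times> 'a \<times> 'a \<Rightarrow> 'a \<times> 'a \<times> 'a \<Rightarrow> real" where
  "fn K0 h xx yy = (case xx of (x, x0, x1) \<Rightarrow> case yy of (y, y0, y1) \<Rightarrow>
      h powr (- (3 * real DIM('a)) / 2) *
      (K0 ((1 / h) *\<^sub>R (x - y)) * K0 ((1 / h) *\<^sub>R (x0 - y0)) * K0 ((1 / h) *\<^sub>R (x1 - y1))))"

end

theory Submission imports Defs begin

text \<open>The bound is deterministic. With \<open>B = sup |K\<^sub>0|\<close>, each centred summand is at most
  \<open>2 B^3 h\<^sub>n^(-3d/2) = 2 B^3 2^(3 d \<gamma> n / 2)\<close> in absolute value, and \<open>R\<^sub>0(n)\<close> is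
  \<open>2^(-n/2)\<close> times a sum of fewer than \<open>2^(n - p(n))\<close> of them. Hence
  \<open>|R\<^sub>0(n)| \<le> 2 B^3 2^((n - p(n)) + (3 d \<gamma> - 1) n / 2)\<close>, and the exponent tends to \<open>-\<infinity>\<close>
  because \<open>3 d \<gamma> < 1\<close> and \<open>(n - p(n)) / n \<rightarrow> 0\<close>.\<close>

lemma Gen_eq_lists_length: "Gen k = {xs. set xs \<subseteq> UNIV \<and> length xs = k}"
  by (auto simp: Gen_def)

lemma finite_Gen: "finite (Gen k)"
  unfolding Gen_eq_lists_length by (rule finite_lists_length_eq) simp

lemma card_Gen: "card (Gen k) = 2 ^ k"
  using card_lists_length_eq[of "UNIV :: bool set" k] by (simp add: Gen_eq_lists_length)

lemma (in prob_space) abs_integral_le_const: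
  fixes f :: "_ \<Rightarrow> real"
  assumes "\<And>\<omega>. \<bar>f \<omega>\<bar> \<le> c"
  shows "\<bar>\<integral>\<omega>. f \<omega> \<partial>M\<bar> \<le> c"
proof (cases "integrable M f")
  case True
  have "\<bar>\<integral>\<omega>. f \<omega> \<partial>M\<bar> \<le> (\<integral>\<omega>. \<bar>f \<omega>\<bar> \<partial>M)"
    by (rule integral_abs_bound)
  also have "\<dots> \<le> c"
    using True assms by (intro integral_le_const) auto
  finally show ?thesis .
next
  case False
  then show ?thesis
    using assms[of undefined] by (simp add: not_integrable_integral_eq)
qed

lemma (in prob_space) nn_integral_square_tendsto_zero:
  fixes Y :: "nat \<Rightarrow> 'a \<Rightarrow> real"
  assumes "\<And>n \<omega>. \<bar>Y n \<omega>\<bar> \<le> b n" and "b \<longlonglongrightarrow> 0"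
  shows "(\<lambda>n. \<integral>\<^sup>+ \<omega>. ennreal ((Y n \<omega>)\<^sup>2) \<partial>M) \<longlonglongrightarrow> 0"
proof (rule tendsto_sandwich[OF _ _ tendsto_const])
  have "(\<integral>\<^sup>+ \<omega>. ennreal ((Y n \<omega>)\<^sup>2) \<partial>M) \<le> ennreal ((b n)\<^sup>2)" for n
  proof (rule nn_integral_le_const)
    have "\<bar>Y n \<omega>\<bar>\<^sup>2 \<le> (b n)\<^sup>2" for \<omega>
      by (rule power_mono[OF assms(1)]) simp
    then show "AE \<omega> in M. ennreal ((Y n \<omega>)\<^sup>2) \<le> ennreal ((b n)\<^sup>2)"
      by (simp add: ennreal_leI)
  qed simp
  then show "\<forall>\<^sub>F n in sequentially. (\<integral>\<^sup>+ \<omega>. ennreal ((Y n \<omega>)\<^sup>2) \<partial>M) \<le> ennreal ((b n)\<^sup>2)"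
    by simp
  have "(\<lambda>n. (b n)\<^sup>2) \<longlonglongrightarrow> 0"
    using tendsto_power[OF assms(2), of 2] by simp
  then show "(\<lambda>n. ennreal ((b n)\<^sup>2)) \<longlonglongrightarrow> 0"
    using tendsto_ennrealI by fastforce
qed simp

lemma powr_tendsto_zero_at_bot:
  fixes b :: real
  assumes "1 < b" and "filterlim E at_bot F"
  shows "((\<lambda>n. b powr E n) \<longlongrightarrow> 0) F"
proof -
  have "filterlim (\<lambda>n. ln b * E n) at_bot F"
    using assms by (intro filterlim_tendsto_pos_mult_at_bot[OF tendsto_const]) simp_all
  then have "((\<lambda>n. exp (ln b * E n)) \<longlongrightarrow> 0) F"
    by (rule filterlim_compose[OF exp_at_bot])
  then show ?thesis
    using assms(1) by (simp add: powr_def mult.commute)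
qed

lemma diff_ratio_tendsto_zero:
  fixes p :: "nat \<Rightarrow> nat"
  assumes "(\<lambda>n. real (p n) / real n) \<longlonglongrightarrow> 1"
  shows "(\<lambda>n. real (n - p n) / real n) \<longlonglongrightarrow> 0"
proof (rule tendsto_sandwich[OF _ _ tendsto_const])
  show "\<forall>\<^sub>F n in sequentially. real (n - p n) / real n \<le> \<bar>1 - real (p n) / real n\<bar>"
  proof (rule eventually_sequentiallyI[of 1])
    fix n :: nat
    assume "1 \<le> n"
    then show "real (n - p n) / real n \<le> \<bar>1 - real (p n) / real n\<bar>"
      by (cases "p n \<le> n") (simp_all add: of_nat_diff diff_divide_distrib)
  qed
  have "(\<lambda>n. \<bar>1 - real (p n) / real n\<bar>) \<longlonglongrightarrow> \<bar>1 - 1\<bar>"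
    by (intro tendsto_rabs tendsto_diff tendsto_const assms)
  then show "(\<lambda>n. \<bar>1 - real (p n) / real n\<bar>) \<longlonglongrightarrow> 0"
    by simp
qed simp

lemma sublinear_plus_negative_linear_at_bot:
  fixes m :: "nat \<Rightarrow> nat"
  assumes "(\<lambda>n. real (m n) / real n) \<longlonglongrightarrow> 0" and "\<kappa> < 0"
  shows "filterlim (\<lambda>n. real (m n) + \<kappa> * real n) at_bot sequentially"
proof -
  have "(\<lambda>n. real (m n) / real n + \<kappa>) \<longlonglongrightarrow> \<kappa>"
    using tendsto_add[OF assms(1) tendsto_const] by simp
  then have lim: "filterlim (\<lambda>n. (real (m n) / real n + \<kappa>) * real n) at_bot sequentially"
    by (rule filterlim_tendsto_neg_mult_at_bot[OF _ assms(2) filterlim_real_sequentially])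
  have "\<forall>\<^sub>F n in sequentially.
      (real (m n) / real n + \<kappa>) * real n = real (m n) + \<kappa> * real n"
    by (rule eventually_sequentiallyI[of 1]) (simp add: distrib_right)
  from filterlim_cong[OF refl refl this, THEN iffD1, OF lim] show ?thesis .
qed

lemma abs_fn_le:
  fixes K0 :: "'a::euclidean_space \<Rightarrow> real"
  assumes "\<And>u. \<bar>K0 u\<bar> \<le> B"
  shows "\<bar>fn K0 h xx t\<bar> \<le> h powr (- (3 * real DIM('a)) / 2) * B ^ 3"
proof -
  obtain x x0 x1 where xx: "xx = (x, x0, x1)" by (cases xx) auto
  obtain y y0 y1 where t: "t = (y, y0, y1)" by (cases t) auto
  have "0 \<le> B" using assms[of 0] by linarith
  have "\<bar>K0 ((1 / h) *\<^sub>R (x - y)) * K0 ((1 / h) *\<^sub>R (x0 - y0)) * K0 ((1 / h) *\<^sub>R (x1 - y1))\<bar>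
      \<le> B * B * B"
    unfolding abs_mult using \<open>0 \<le> B\<close> by (intro mult_mono assms) auto
  then show ?thesis
    unfolding xx t fn_def prod.case abs_mult power3_eq_cube abs_of_nonneg[OF powr_ge_zero]
    by (intro mult_left_mono) auto
qed

lemma abs_MA_le:
  assumes "finite A" and "\<And>t. \<bar>g t\<bar> \<le> c"
  shows "\<bar>MA A X g \<omega>\<bar> \<le> real (card A) * c"
proof -
  have "\<bar>MA A X g \<omega>\<bar> \<le> (\<Sum>u\<in>A. \<bar>g (X u \<omega>, X (u @ [False]) \<omega>, X (u @ [True]) \<omega>)\<bar>)"
    unfolding MA_def by (rule sum_abs)
  also have "\<dots> \<le> (\<Sum>u\<in>A. c)"
    by (intro sum_mono assms(2))
  finally show ?thesis by simp
qed

lemma abs_sum_MA_Gen_le: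
  assumes "\<And>t. \<bar>g t\<bar> \<le> c"
  shows "\<bar>\<Sum>k<m. MA (Gen k) X g \<omega>\<bar> \<le> 2 ^ m * c"
proof -
  have "0 \<le> c" using assms[of undefined] by linarith
  have "\<bar>\<Sum>k<m. MA (Gen k) X g \<omega>\<bar> \<le> (\<Sum>k<m. \<bar>MA (Gen k) X g \<omega>\<bar>)"
    by (rule sum_abs)
  also have "\<dots> \<le> (\<Sum>k<m. 2 ^ k * c)"
    using abs_MA_le[OF finite_Gen assms] by (intro sum_mono) (simp add: card_Gen)
  also have "\<dots> = (2 ^ m - 1) * c"
    by (simp add: geometric_sum flip: sum_distrib_right)
  also have "\<dots> \<le> 2 ^ m * c"
    using \<open>0 \<le> c\<close> by (intro mult_right_mono) auto
  finally show ?thesis .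
qed

lemma abs_centred_generation_sum_le:
  fixes K0 :: "'a::euclidean_space \<Rightarrow> real" and h :: real and xx :: "'a \<times> 'a \<times> 'a"
  assumes K0_le: "\<And>u. \<bar>K0 u\<bar> \<le> B"
    and "prob_space \<mu>" and "\<And>y. prob_space (P y)"
  defines "f \<equiv> fn K0 h xx"
  shows "\<bar>real (card (Gen n)) powr (- 1 / 2) *
           (\<Sum>k<m. MA (Gen k) X (\<lambda>t. f t - (\<integral>y. Pop3 P f y \<partial>\<mu>)) \<omega>)\<bar>
         \<le> 2 * B ^ 3 * (2 powr (real m - real n / 2) * h powr (- (3 * real DIM('a)) / 2))"
proof -
  define C where "C = h powr (- (3 * real DIM('a)) / 2) * B ^ 3"
  have f_le: "\<bar>f t\<bar> \<le> C" for t
    unfolding f_def C_def by (rule abs_fn_le[OF K0_le])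
  have "\<bar>\<integral>y. Pop3 P f y \<partial>\<mu>\<bar> \<le> C"
    using f_le unfolding Pop3_def
    by (intro prob_space.abs_integral_le_const assms)
  then have "\<bar>f t - (\<integral>y. Pop3 P f y \<partial>\<mu>)\<bar> \<le> 2 * C" for t
    using f_le[of t] by linarith
  then have S_le: "\<bar>\<Sum>k<m. MA (Gen k) X (\<lambda>t. f t - (\<integral>y. Pop3 P f y \<partial>\<mu>)) \<omega>\<bar>
      \<le> 2 ^ m * (2 * C)"
    by (rule abs_sum_MA_Gen_le)
  define a where "a = real (card (Gen n)) powr (- 1 / 2)"
  have a_eq: "a * 2 ^ m = 2 powr (real m - real n / 2)"
    by (simp add: a_def card_Gen powr_powr powr_diff powr_minus_divide flip: powr_realpow)
  have "\<bar>a * (\<Sum>k<m. MA (Gen k) X (\<lambda>t. f t - (\<integral>y. Pop3 P f y \<partial>\<mu>)) \<omega>)\<bar>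
      \<le> a * (2 ^ m * (2 * C))"
    unfolding abs_mult by (simp add: a_def mult_left_mono S_le)
  also have "\<dots> = 2 * B ^ 3 * ((a * 2 ^ m) * h powr (- (3 * real DIM('a)) / 2))"
    unfolding C_def by (simp only: ac_simps)
  finally show ?thesis
    unfolding a_eq by (simp only: a_def)
qed

theorem lemma6p1:
  fixes M :: "'w measure"
    and X :: "bool list \<Rightarrow> 'w \<Rightarrow> 'a::euclidean_space"
    and \<nu> \<mu> :: "'a measure"
    and P :: "'a \<Rightarrow> ('a \<times> 'a) measure"
    and F :: "('a \<Rightarrow> real) set"
    and \<alpha> \<gamma> :: real
    and pd :: "'a \<Rightarrow> 'a \<Rightarrow> 'a \<Rightarrow> real"
    and mu_d :: "'a \<Rightarrow> real"
    and K0 :: "'a \<Rightarrow> real"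
    and h :: "nat \<Rightarrow> real"
    and x x0 x1 :: 'a
    and p :: "nat \<Rightarrow> nat"
  assumes kernel: "P \<in> borel \<rightarrow>\<^sub>M prob_algebra borel"
    and bmc: "BMC M X \<nu> P"
    and H1: "H1 F \<nu> P"
    and H2: "H2 F P \<mu> \<alpha>"
    and H3_meas: "(\<lambda>(y, y0, y1). pd y y0 y1) \<in> borel_measurable borel"
    and H3_nonneg: "\<And>y y0 y1. 0 \<le> pd y y0 y1"
    and H3_dens: "\<And>y. P y = density lborel (\<lambda>z. ennreal (pd y (fst z) (snd z)))"
    and mu_dens: "\<mu> = density lborel (\<lambda>y. ennreal (mu_d y))"
    and mu_d_meas: "mu_d \<in> borel_measurable borel"
    and mu_d_nonneg: "\<And>y. 0 \<le> mu_d y"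
    and H4: "(SUP t. ennreal (mu_d (fst t)) + Qd pd (fst t) (fst (snd t))
                     + ennreal (pd (fst t) (fst (snd t)) (snd (snd t)))) < \<infinity>"
    and h_def: "\<And>n. h n = 2 powr (- real n * \<gamma>)"
    and gamma_pos: "0 < \<gamma>"
    and gamma_lt: "\<gamma> < 1 / (3 * real DIM('a))"
    and alpha_gamma: "2 * \<alpha>\<^sup>2 < 2 powr (3 * real DIM('a) * \<gamma>)"
    and K0_bounded: "bounded (range K0)"
    and K0_int: "integrable lborel K0"
    and K0_one: "(\<integral>u. K0 u \<partial>lborel) = 1"
    and mu_x_pos: "0 < mu_d x"
    and p_mono: "mono p"
    and p_range: "\<And>n. 2 \<le> n \<Longrightarrow> 0 < p n \<and> p n < n"
    and p_ratio: "(\<lambda>n. real (p n) / real n) \<longlonglongrightarrow> 1"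
    and p_gap: "\<And>lam. 0 < lam \<Longrightarrow>
                  filterlim (\<lambda>n. real n - real (p n) - lam * ln (real n)) at_top sequentially"
  shows "(\<lambda>n. \<integral>\<^sup>+ \<omega>.
            ennreal ((real (card (Gen n)) powr (- 1 / 2) *
              (\<Sum>k<n - p n. MA (Gen k) X
                 (\<lambda>t. fn K0 (h n) (x, x0, x1) t
                       - (\<integral>y. Pop3 P (fn K0 (h n) (x, x0, x1)) y \<partial>\<mu>)) \<omega>))\<^sup>2) \<partial>M)
         \<longlonglongrightarrow> 0"
proof -
  obtain B where K0_le: "\<And>u. \<bar>K0 u\<bar> \<le> B"
    using K0_bounded by (auto simp: bounded_iff)
  have "prob_space M" using bmc by (simp add: BMC_def)
  have "prob_space \<mu>" using H2 by (simp add: H2_def)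
  have "prob_space (P y)" for y
    using measurable_space[OF kernel] by (simp add: space_prob_algebra)
  define \<kappa> where "\<kappa> = (3 * real DIM('a) * \<gamma> - 1) / 2"
  have "\<kappa> < 0"
    using gamma_lt by (simp add: \<kappa>_def field_simps)
  define E where "E n = real (n - p n) + \<kappa> * real n" for n
  have "filterlim E at_bot sequentially"
    unfolding E_def using diff_ratio_tendsto_zero[OF p_ratio] \<open>\<kappa> < 0\<close>
    by (rule sublinear_plus_negative_linear_at_bot)
  then have bound_tendsto: "(\<lambda>n. 2 * B ^ 3 * 2 powr E n) \<longlonglongrightarrow> 2 * B ^ 3 * 0"
    by (intro tendsto_mult tendsto_const powr_tendsto_zero_at_bot) simp_all
  have bound_eq: "2 powr (real (n - p n) - real n / 2) * h n powr (- (3 * real DIM('a)) / 2)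
      = 2 powr E n" for n
  proof -
    have "h n powr (- (3 * real DIM('a)) / 2) = 2 powr (real n * \<gamma> * (3 * real DIM('a)) / 2)"
      by (simp add: h_def powr_powr)
    moreover have "real (n - p n) - real n / 2 + real n * \<gamma> * (3 * real DIM('a)) / 2 = E n"
      by (simp add: E_def \<kappa>_def field_simps)
    ultimately show ?thesis
      by (simp flip: powr_add)
  qed
  have "\<bar>real (card (Gen n)) powr (- 1 / 2) *
              (\<Sum>k<n - p n. MA (Gen k) X
                 (\<lambda>t. fn K0 (h n) (x, x0, x1) t
                       - (\<integral>y. Pop3 P (fn K0 (h n) (x, x0, x1)) y \<partial>\<mu>)) \<omega>)\<bar>
      \<le> 2 * B ^ 3 * 2 powr E n" for n \<omega>
    using abs_centred_generation_sum_le[OF K0_le \<open>prob_space \<mu>\<close> \<open>\<And>y. prob_space (P y)\<close>,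
        where h = "h n" and n = n and m = "n - p n" and xx = "(x, x0, x1)"]
    unfolding bound_eq .
  with bound_tendsto show ?thesis
    by (intro prob_space.nn_integral_square_tendsto_zero[OF \<open>prob_space M\<close>]) simp_all
qed

end
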